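(* Let $(\mathbf{L},\mathbf{R})\in\mathcal{P}_{\mathsf N}$ be centered. Then every contraction map for $(\mathbf{L},\mathbf{R})$ is a dominance map for $(\mathbf{L},\mathbf{R})$. Consequently, if a centered pair admits a contraction map, it admits a dominance map.
   Context: $\mathcal{P}_{\mathsf N}$ denotes the set of pairs $(\mathbf{L},\mathbf{R})$ of $(0,1)$-matrices, $\mathbf{L}$ of size $(\mathsf N+1)\times m_L$ and $\mathbf{R}$ of size $(\mathsf N+1)\times m_R$, such that some index $p\in[\mathsf N+1]$ has row $p$ of $\mathbf{L}$ and row $p$ of $\mathbf{R}$ both zero. $\mathbf{A}_{(i)}$ denotes the $i$-th row; $e$ the all-ones row vector; $|v|=\sum_k|v_k|$; $|x-x'|$ the Hamming distance; $\le$ between vectors is componentwise. The pair is centered if it is balanced ($|\mathbf{L}_{(i)}|=|\mathbf{R}_{(i)}|$ for all $i$) and for some $i$, $\mathbf{L}_{(i)}=e=\mathbf{R}_{(i)}$. A contraction map is $f:\{0,1\}^{m_L}\to\{0,1\}^{m_R}$ with $f(\mathbf{L}_{(i)})=\mathbf{R}_{(i)}$ for all $i$ and $|x-x'|\ge|f(x)-f(x')|$ for all $x,x'$. A dominance map is $f:\{0,1\}^{m_L}\to\{0,1\}^{m_R}$ with $|u|=|f(u)|$ and $\mathbf{L}u^T\le\mathbf{R}f(u)^T$ for all $u\in\{0,1\}^{m_L}$. *)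

theory Defs
  imports Main
begin

text \<open>Binary row vectors in {0,1}^m are represented as lists of naturals of length m
  with entries in {0,1}; a (0,1)-matrix is the list of its rows.\<close>

definition binvec :: "nat \<Rightarrow> nat list \<Rightarrow> bool" where
  "binvec m v \<longleftrightarrow> length v = m \<and> set v \<subseteq> {0, 1}"

definition binmat :: "nat \<Rightarrow> nat \<Rightarrow> nat list list \<Rightarrow> bool" where
  "binmat r m A \<longleftrightarrow> length A = r \<and> (\<forall>i<r. binvec m (A ! i))"

definition wt :: "nat list \<Rightarrow> nat" where
  "wt v = sum_list v"

definition hdist :: "nat list \<Rightarrow> nat list \<Rightarrow> nat" where
  "hdist x y = (\<Sum>k<length x. nat \<bar>int (x ! k) - int (y ! k)\<bar>)"

definition dotp :: "nat list \<Rightarrow> nat list \<Rightarrow> nat" where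
  "dotp r u = (\<Sum>k<length r. r ! k * u ! k)"

definition inP :: "nat \<Rightarrow> nat \<Rightarrow> nat \<Rightarrow> nat list list \<Rightarrow> nat list list \<Rightarrow> bool" where
  "inP N mL mR L R \<longleftrightarrow> binmat (N + 1) mL L \<and> binmat (N + 1) mR R \<and>
     (\<exists>p<N + 1. L ! p = replicate mL 0 \<and> R ! p = replicate mR 0)"

definition centered :: "nat \<Rightarrow> nat \<Rightarrow> nat \<Rightarrow> nat list list \<Rightarrow> nat list list \<Rightarrow> bool" where
  "centered N mL mR L R \<longleftrightarrow>
     (\<forall>i<N + 1. wt (L ! i) = wt (R ! i)) \<and>
     (\<exists>i<N + 1. L ! i = replicate mL 1 \<and> R ! i = replicate mR 1)"

definition binmap :: "nat \<Rightarrow> nat \<Rightarrow> (nat list \<Rightarrow> nat list) \<Rightarrow> bool" where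
  "binmap mL mR f \<longleftrightarrow> (\<forall>x. binvec mL x \<longrightarrow> binvec mR (f x))"

definition contraction_map ::
  "nat \<Rightarrow> nat \<Rightarrow> nat \<Rightarrow> nat list list \<Rightarrow> nat list list \<Rightarrow> (nat list \<Rightarrow> nat list) \<Rightarrow> bool" where
  "contraction_map N mL mR L R f \<longleftrightarrow> binmap mL mR f \<and>
     (\<forall>i<N + 1. f (L ! i) = R ! i) \<and>
     (\<forall>x x'. binvec mL x \<longrightarrow> binvec mL x' \<longrightarrow> hdist (f x) (f x') \<le> hdist x x')"

definition dominance_map ::
  "nat \<Rightarrow> nat \<Rightarrow> nat \<Rightarrow> nat list list \<Rightarrow> nat list list \<Rightarrow> (nat list \<Rightarrow> nat list) \<Rightarrow> bool" where
  "dominance_map N mL mR L R f \<longleftrightarrow> binmap mL mR f \<and>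
     (\<forall>u. binvec mL u \<longrightarrow> wt u = wt (f u) \<and>
        (\<forall>i<N + 1. dotp (L ! i) u \<le> dotp (R ! i) (f u)))"

end

theory Submission
  imports Defs
begin

text \<open>For binary vectors x, y of equal length, |x - y| + 2 x y^T = |x| + |y|.
  Applied to u and the zero row, resp. the all-ones row, of a centered pair (both fixed by a
  contraction map f), it gives |f u| \<le> |u| and m - |f u| \<le> m - |u|, so f preserves weight.
  Applied to u and any row L_i, the contraction inequality |f u - R_i| \<le> |u - L_i| together with
  balance |L_i| = |R_i| and |f u| = |u| then yields L_i u^T \<le> R_i f(u)^T.\<close>

lemma binvec_replicate: "c \<in> {0, 1} \<Longrightarrow> binvec m (replicate m c)"
  by (auto simp: binvec_def)

lemma wt_replicate: "wt (replicate m c) = m * c"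
  by (simp add: wt_def sum_list_replicate)

lemma dotp_commute: "length x = length y \<Longrightarrow> dotp x y = dotp y x"
  by (simp add: dotp_def mult.commute)

lemma dotp_replicate_0: "length x = m \<Longrightarrow> dotp x (replicate m 0) = 0"
  by (simp add: dotp_def)

lemma dotp_replicate_1: "length x = m \<Longrightarrow> dotp x (replicate m 1) = wt x"
  by (simp add: dotp_def wt_def sum_list_sum_nth atLeast0LessThan)

lemma hdist_add_double_dotp:
  assumes "binvec m x" "binvec m y"
  shows "hdist x y + 2 * dotp x y = wt x + wt y"
proof -
  have len: "length x = m" "length y = m"
    using assms by (auto simp: binvec_def)
  have "x ! k \<in> {0, 1} \<and> y ! k \<in> {0, 1}" if "k < m" for k
  proof -
    have "x ! k \<in> set x" "y ! k \<in> set y"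
      using that len by auto
    then show ?thesis
      using assms by (auto simp: binvec_def)
  qed
  then have entry: "nat \<bar>int (x ! k) - int (y ! k)\<bar> + 2 * (x ! k * y ! k) = x ! k + y ! k"
    if "k < m" for k
    using that by fastforce
  have "hdist x y + 2 * dotp x y
      = (\<Sum>k<m. nat \<bar>int (x ! k) - int (y ! k)\<bar> + 2 * (x ! k * y ! k))"
    by (simp add: hdist_def dotp_def len sum.distrib sum_distrib_left)
  also have "\<dots> = (\<Sum>k<m. x ! k + y ! k)"
    using entry by simp
  also have "\<dots> = wt x + wt y"
    by (simp add: wt_def sum_list_sum_nth len sum.distrib atLeast0LessThan)
  finally show ?thesis .
qed

lemma hdist_replicate_0:
  assumes "binvec m x"
  shows "hdist x (replicate m 0) = wt x"
proof -
  have "length x = m"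
    using assms by (simp add: binvec_def)
  then show ?thesis
    using hdist_add_double_dotp[OF assms binvec_replicate[of 0 m]]
    by (simp add: dotp_replicate_0 wt_replicate)
qed

lemma hdist_replicate_1:
  assumes "binvec m x"
  shows "hdist x (replicate m 1) + wt x = m"
proof -
  have "length x = m"
    using assms by (simp add: binvec_def)
  then show ?thesis
    using hdist_add_double_dotp[OF assms binvec_replicate[of 1 m]] dotp_replicate_1[of x m]
    by (simp add: wt_replicate)
qed

lemma wt_eq_if_hdist_replicate_le:
  assumes "binvec m u" "binvec m v"
    and "hdist v (replicate m 0) \<le> hdist u (replicate m 0)"
    and "hdist v (replicate m 1) \<le> hdist u (replicate m 1)"
  shows "wt u = wt v"
  using assms hdist_replicate_0[of m u] hdist_replicate_0[of m v]
    hdist_replicate_1[of m u] hdist_replicate_1[of m v]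
  by linarith

lemma dotp_le_if_hdist_le:
  assumes "binvec m x" "binvec m u" "binvec n y" "binvec n v"
    and "wt x = wt y" "wt u = wt v" and "hdist v y \<le> hdist u x"
  shows "dotp x u \<le> dotp y v"
proof -
  have "dotp x u = dotp u x" "dotp y v = dotp v y"
    using assms(1-4) by (auto simp: binvec_def intro: dotp_commute)
  then show ?thesis
    using assms hdist_add_double_dotp[of m u x] hdist_add_double_dotp[of n v y] by linarith
qed

lemma contraction_map_imp_dominance_map:
  assumes "inP N mL mR L R" and "centered N mL mR L R"
    and contr: "contraction_map N mL mR L R f"
  shows "dominance_map N mL mR L R f"
proof -
  obtain p where p: "p < N + 1" "L ! p = replicate mL 0" "R ! p = replicate mR 0"
    using assms(1) by (auto simp: inP_def)
  obtain q where q: "q < N + 1" "L ! q = replicate mL 1" "R ! q = replicate mR 1"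
    using assms(2) by (auto simp: centered_def)
  have balanced: "wt (L ! i) = wt (R ! i)" if "i < N + 1" for i
    using assms(2) that by (auto simp: centered_def)
  have "mR = mL"
    using balanced[OF q(1)] q by (simp add: wt_replicate)
  have rows: "binvec mL (L ! i)" "binvec mR (R ! i)" if "i < N + 1" for i
    using assms(1) that by (auto simp: inP_def binmat_def)
  have f_binmap: "binmap mL mR f"
    and f_rows: "\<And>i. i < N + 1 \<Longrightarrow> f (L ! i) = R ! i"
    and f_contr: "\<And>x x'. binvec mL x \<Longrightarrow> binvec mL x' \<Longrightarrow> hdist (f x) (f x') \<le> hdist x x'"
    using contr by (auto simp: contraction_map_def)
  have f_contr_row: "hdist (f u) (R ! i) \<le> hdist u (L ! i)"
    if "binvec mL u" "i < N + 1" for u i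
    using f_contr[OF that(1) rows(1)[OF that(2)]] f_rows[OF that(2)] by simp
  show ?thesis
    unfolding dominance_map_def
  proof (intro conjI allI impI f_binmap)
    fix u
    assume u: "binvec mL u"
    have fu: "binvec mL (f u)"
      using f_binmap u \<open>mR = mL\<close> by (auto simp: binmap_def)
    show wt_fu: "wt u = wt (f u)"
      using wt_eq_if_hdist_replicate_le[OF u fu]
        f_contr_row[OF u p(1)] f_contr_row[OF u q(1)] p q \<open>mR = mL\<close> by simp
    fix i
    assume "i < N + 1"
    then show "dotp (L ! i) u \<le> dotp (R ! i) (f u)"
      using dotp_le_if_hdist_le[OF rows(1) u rows(2) fu[folded \<open>mR = mL\<close>]]
        balanced wt_fu f_contr_row[OF u] by blast
  qed
qed

theorem corollary2:
  fixes N mL mR :: nat and L R :: "nat list list"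
  assumes "inP N mL mR L R" and "centered N mL mR L R"
  shows "(\<forall>f. contraction_map N mL mR L R f \<longrightarrow> dominance_map N mL mR L R f) \<and>
         ((\<exists>f. contraction_map N mL mR L R f) \<longrightarrow> (\<exists>g. dominance_map N mL mR L R g))"
  using contraction_map_imp_dominance_map[OF assms] by blast

end
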